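(* Let $G$ be a finite group and $n\ge 1$ an integer. If there exists a $2$-starter under $G$ (i.e. in $K_{\overline{G}}$), then there exists a $2n$-starter under $G\times\mathbb{Z}_n$ (i.e. in $K_{\overline{G\times\mathbb{Z}_n}}$).
   Context: For a finite group $G$, $\overline{G}=G\cup\{\infty\}$, and $K_V$ denotes the complete graph on vertex set $V$. $G$ acts on $\overline{G}$ by right multiplication, with $\infty g=\infty$; for a subgraph $F$ of $K_{\overline{G}}$ and $g\in G$, $Fg$ is the graph obtained by replacing every vertex $v$ by $vg$, and the $G$-stabilizer of $F$ is $\{g\in G: Fg=F\}$. A $k$-factor of $K_V$ is a spanning $k$-regular subgraph. For a graph $\Gamma$ with vertex set $\overline{G}$, its list of differences is the multiset $\Delta\Gamma=\{ab^{-1},\ ba^{-1} : [a,b]\in E(\Gamma),\ a\neq\infty\neq b\}$. Given a finite group $G$ with $k$ dividing $|G|$, a $k$-factor $F$ of $K_{\overline{G}}$ is a $k$-starter under $G$ if (1) the $G$-stabilizer of $F$ has order $k$, and (2) $\Delta F$ contains every element of $G\setminus\{1_G\}$. In $G\times\mathbb{Z}_n$ the group operation is $(g,i)(h,j)=(gh,i+j)$. *)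

theory Defs
  imports "HOL-Algebra.Elementary_Groups"
begin

text \<open>The extended vertex set G-bar = G with an extra point infinity; infinity is None.\<close>
definition bar :: "('a, 'b) monoid_scheme \<Rightarrow> 'a option set" where
  "bar G = insert None (Some ` carrier G)"

definition is_factor :: "nat \<Rightarrow> 'v set \<Rightarrow> 'v set set \<Rightarrow> bool" where
  "is_factor k V E \<longleftrightarrow>
     E \<subseteq> {e. \<exists>a b. a \<in> V \<and> b \<in> V \<and> a \<noteq> b \<and> e = {a, b}} \<and>
     (\<forall>v\<in>V. card {e \<in> E. v \<in> e} = k)"

definition act :: "('a, 'b) monoid_scheme \<Rightarrow> 'a \<Rightarrow> 'a option \<Rightarrow> 'a option" where
  "act G g v = map_option (\<lambda>a. a \<otimes>\<^bsub>G\<^esub> g) v"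

definition stab :: "('a, 'b) monoid_scheme \<Rightarrow> 'a option set set \<Rightarrow> 'a set" where
  "stab G E = {g \<in> carrier G. (\<lambda>e. act G g ` e) ` E = E}"

text \<open>Underlying set of the list of differences.\<close>
definition diffs :: "('a, 'b) monoid_scheme \<Rightarrow> 'a option set set \<Rightarrow> 'a set" where
  "diffs G E = {x. \<exists>a b. {Some a, Some b} \<in> E \<and> a \<noteq> b \<and>
                  (x = a \<otimes>\<^bsub>G\<^esub> inv\<^bsub>G\<^esub> b \<or> x = b \<otimes>\<^bsub>G\<^esub> inv\<^bsub>G\<^esub> a)}"

definition starter :: "('a, 'b) monoid_scheme \<Rightarrow> nat \<Rightarrow> 'a option set set \<Rightarrow> bool" where
  "starter G k F \<longleftrightarrow> k dvd order G \<and> is_factor k (bar G) F \<and>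
     card (stab G F) = k \<and> carrier G - {\<one>\<^bsub>G\<^esub>} \<subseteq> diffs G F"

end

theory Submission
  imports Defs
begin

text \<open>Blow every vertex a of G up into the fibre {a} \<times> Z_n and lift the starter F as in
  lift_adj below. A vertex in the fibre of a neighbour of \<infinity> loses one fibre of neighbours to
  \<infinity> and regains the n - 1 other points of its own fibre, so every degree is multiplied by n.
  The translations by {1} \<times> Z_n map every fibre onto itself and fix the lift, so its
  stabilizer is stab F \<times> Z_n. An edge {a, b} of F lifted between levels j and 0 yields the
  difference (a b^-1, j), and the complete graphs on the fibres yield the differences (1, j).
  Nothing depends on k = 2: every k-starter with k \<ge> 1 lifts to a kn-starter.\<close>

lemma act_None [simp]: "act G g None = None"
  by (simp add: act_def)

lemma act_Some [simp]: "act G g (Some a) = Some (a \<otimes>\<^bsub>G\<^esub> g)"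
  by (simp add: act_def)

lemma (in group) act_inv_act:
  assumes "g \<in> carrier G" "x \<in> bar G"
  shows "act G (inv g) (act G g x) = x"
  using assms by (cases x) (auto simp: bar_def m_assoc)

lemma (in group) stab_iff_closed:
  assumes E: "\<forall>e\<in>E. e \<subseteq> bar G" and g: "g \<in> carrier G"
  shows "g \<in> stab G E \<longleftrightarrow>
    (\<forall>e\<in>E. act G g ` e \<in> E) \<and> (\<forall>e\<in>E. act G (inv g) ` e \<in> E)"
proof -
  have undo: "(\<lambda>e. act G (inv h) ` e) ` (\<lambda>e. act G h ` e) ` E = E" if "h \<in> carrier G" for h
  proof -
    have "act G (inv h) ` act G h ` e = e" if "e \<in> E" for e
      using E that act_inv_act[OF \<open>h \<in> carrier G\<close>] by (force simp: image_image)
    thus ?thesis by (simp add: image_image)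
  qed
  show ?thesis
  proof
    assume "g \<in> stab G E"
    hence fixed: "(\<lambda>e. act G g ` e) ` E = E" by (simp add: stab_def)
    moreover have "(\<lambda>e. act G (inv g) ` e) ` E = E"
      using undo[OF g] by (simp only: fixed)
    ultimately show "(\<forall>e\<in>E. act G g ` e \<in> E) \<and> (\<forall>e\<in>E. act G (inv g) ` e \<in> E)"
      by (metis image_eqI)
  next
    assume closed: "(\<forall>e\<in>E. act G g ` e \<in> E) \<and> (\<forall>e\<in>E. act G (inv g) ` e \<in> E)"
    have "E = (\<lambda>e. act G g ` e) ` (\<lambda>e. act G (inv g) ` e) ` E"
      using undo[of "inv g"] g by simp
    also have "\<dots> \<subseteq> (\<lambda>e. act G g ` e) ` E"
      using closed by (intro image_mono) blast
    finally show "g \<in> stab G E"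
      using closed g by (auto simp: stab_def)
  qed
qed

lemma card_incident_eq_card_adjacent:
  assumes "\<forall>e\<in>E. \<exists>a b. e = {a, b}"
  shows "card {e \<in> E. v \<in> e} = card {u. {v, u} \<in> E}"
proof -
  have "{e \<in> E. v \<in> e} = (\<lambda>u. {v, u}) ` {u. {v, u} \<in> E}"
    using assms by (fastforce simp: insert_commute)
  moreover have "inj_on (\<lambda>u. {v, u}) {u. {v, u} \<in> E}"
    by (auto simp: inj_on_def doubleton_eq_iff)
  ultimately show ?thesis by (simp add: card_image)
qed

lemma mem_diffs_iff:
  "x \<in> diffs G E \<longleftrightarrow> (\<exists>a b. {Some a, Some b} \<in> E \<and> a \<noteq> b \<and> x = a \<otimes>\<^bsub>G\<^esub> inv\<^bsub>G\<^esub> b)"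
proof -
  have "{Some b, Some a} \<in> E" if "{Some a, Some b} \<in> E" for a b
    using that by (simp add: insert_commute)
  thus ?thesis unfolding diffs_def by blast
qed

lemma mod_add_right_cancel:
  "(i + k) mod (m::int) = (j + k) mod m \<Longrightarrow> i mod m = j mod m"
  by (metis add_diff_eq diff_add_cancel mod_add_left_eq)

text \<open>An edge {a, b} of F becomes the complete bipartite graph between the fibres of a and b,
  an edge {\<infinity>, a} joins \<infinity> to the whole fibre of a, and the fibre of every neighbour
  of \<infinity> becomes a complete graph. The levels range over Z, which will be Z_n = {0..<n}.\<close>

fun lift_adj :: "'a option set set \<Rightarrow> int set \<Rightarrow> ('a \<times> int) option \<Rightarrow> ('a \<times> int) option \<Rightarrow> bool"
where
  "lift_adj F Z None None = False"
| "lift_adj F Z None (Some (b, j)) = ({None, Some b} \<in> F \<and> j \<in> Z)"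
| "lift_adj F Z (Some (a, i)) None = ({None, Some a} \<in> F \<and> i \<in> Z)"
| "lift_adj F Z (Some (a, i)) (Some (b, j)) = (i \<in> Z \<and> j \<in> Z \<and>
     ({Some a, Some b} \<in> F \<or> (a = b \<and> i \<noteq> j \<and> {None, Some a} \<in> F)))"

definition lift_graph :: "'a option set set \<Rightarrow> int set \<Rightarrow> ('a \<times> int) option set set" where
  "lift_graph F Z = {{x, y} | x y. lift_adj F Z x y}"

definition at_level :: "int \<Rightarrow> 'a option \<Rightarrow> ('a \<times> int) option" where
  "at_level i = map_option (\<lambda>a. (a, i))"

lemma lift_adj_sym: "lift_adj F Z x y \<Longrightarrow> lift_adj F Z y x"
  by (cases x; cases y) (auto simp: insert_commute)

lemma doubleton_mem_lift_graph [simp]: "{x, y} \<in> lift_graph F Z \<longleftrightarrow> lift_adj F Z x y"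
  unfolding lift_graph_def by (auto simp: doubleton_eq_iff dest: lift_adj_sym)

lemma option_pair_cases: "(u = None \<Longrightarrow> P) \<Longrightarrow> (\<And>b j. u = Some (b, j) \<Longrightarrow> P) \<Longrightarrow> P"
  by (metis option.exhaust surj_pair)

lemma Collect_option_eqI:
  "(P None \<longleftrightarrow> None \<in> S) \<Longrightarrow> (\<And>b. P (Some b) \<longleftrightarrow> Some b \<in> S) \<Longrightarrow> {u. P u} = S"
  by (metis mem_Collect_eq not_None_eq subsetI subset_antisym)

lemma Collect_option_pair_eqI:
  "(P None \<longleftrightarrow> None \<in> S) \<Longrightarrow> (\<And>b j. P (Some (b, j)) \<longleftrightarrow> Some (b, j) \<in> S) \<Longrightarrow> {u. P u} = S"
  by (rule Collect_option_eqI) auto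

locale lifting = group +
  fixes n :: nat and F :: "'a option set set"
  assumes finite_carrier: "finite (carrier G)"
    and n_pos: "1 \<le> n"
    and F_edges: "F \<subseteq> {e. \<exists>a b. a \<in> bar G \<and> b \<in> bar G \<and> a \<noteq> b \<and> e = {a, b}}"
begin

abbreviation H :: "('a \<times> int) monoid" where
  "H \<equiv> G \<times>\<times> integer_mod_group n"

abbreviation Z :: "int set" where
  "Z \<equiv> {0..<int n}"

lemma carrier_Z [simp]: "carrier (integer_mod_group n) = Z"
  using n_pos by (simp add: carrier_integer_mod_group)

lemma carrier_H: "carrier H = carrier G \<times> Z"
  by simp

lemma group_H: "group H"
  by (simp add: DirProd_group is_group)

lemma inv_H: "g \<in> carrier G \<Longrightarrow> k \<in> Z \<Longrightarrow> inv\<^bsub>H\<^esub> (g, k) = (inv g, (- k) mod int n)"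
  by simp

lemma act_H_at_level [simp]: "act H (g, k) (at_level i x) = at_level ((i + k) mod int n) (act G g x)"
  by (cases x) (simp_all add: at_level_def)

lemma mod_n_in_Z [simp]: "x mod int n \<in> Z"
  using n_pos by simp

lemma bar_H: "bar H = insert None (Some ` (carrier G \<times> Z))"
  unfolding bar_def carrier_H ..

lemma F_edge: "{x, y} \<in> F \<Longrightarrow> x \<noteq> y \<and> x \<in> bar G \<and> y \<in> bar G"
  using F_edges by (fastforce simp: doubleton_eq_iff)

lemma F_no_loop: "{x} \<notin> F"
  using F_edge[of x x] by (metis insert_absorb2)

lemma lift_adj_edge: "lift_adj F Z x y \<Longrightarrow> x \<noteq> y \<and> x \<in> bar H \<and> y \<in> bar H"
  by (cases x rule: option_pair_cases; cases y rule: option_pair_cases)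
     (auto simp: bar_H bar_def[of G] F_no_loop dest!: F_edge)

lemma lift_adj_at_level: "i \<in> Z \<Longrightarrow> lift_adj F Z (at_level i x) (at_level i y) \<longleftrightarrow> {x, y} \<in> F"
  by (cases x; cases y) (auto simp: at_level_def F_no_loop insert_commute)

lemma card_adjacent_F:
  assumes "is_factor k (bar G) F" "v \<in> bar G"
  shows "card {u. {v, u} \<in> F} = k"
proof -
  have "\<forall>e\<in>F. \<exists>a b. e = {a, b}" using F_edges by blast
  thus ?thesis
    using assms card_incident_eq_card_adjacent[of F v] unfolding is_factor_def by simp
qed

lemma finite_adjacent_F: "finite {b. {x, Some b} \<in> F}"
  using finite_carrier by (rule finite_subset[rotated]) (auto simp: bar_def dest!: F_edge)

lemma card_lift_adj_None:
  assumes "is_factor k (bar G) F"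
  shows "card {u. lift_adj F Z None u} = k * n"
proof -
  define A where "A = {a. {None, Some a} \<in> F}"
  have "{u. lift_adj F Z None u} = Some ` (A \<times> Z)"
    by (rule Collect_option_pair_eqI) (auto simp: A_def)
  moreover have "{u. {None, u} \<in> F} = Some ` A"
    by (rule Collect_option_eqI) (auto simp: A_def F_no_loop)
  ultimately show ?thesis
    using card_adjacent_F[OF assms, of None] finite_adjacent_F[of None]
    by (simp add: A_def bar_def card_image card_cartesian_product)
qed

lemma card_lift_adj_Some:
  assumes "is_factor k (bar G) F" "a \<in> carrier G" "i \<in> Z"
  shows "card {u. lift_adj F Z (Some (a, i)) u} = k * n"
proof -
  define B where "B = {b. {Some a, Some b} \<in> F}"
  have fin: "finite B" using finite_adjacent_F by (simp add: B_def)
  have a_notin_B: "a \<notin> B" using F_no_loop by (simp add: B_def)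
  have deg: "card {u. {Some a, u} \<in> F} = k"
    using card_adjacent_F[OF assms(1)] assms(2) by (simp add: bar_def)
  show ?thesis
  proof (cases "{None, Some a} \<in> F")
    case True
    have "{u. {Some a, u} \<in> F} = insert None (Some ` B)"
      by (rule Collect_option_eqI) (auto simp: B_def True insert_commute)
    hence k: "k = card B + 1"
      using deg fin by (simp add: card_image)
    have "{u. lift_adj F Z (Some (a, i)) u} = insert None (Some ` (B \<times> Z \<union> {a} \<times> (Z - {i})))"
      using assms(3) by (intro Collect_option_pair_eqI) (auto simp: B_def True)
    moreover have "card (B \<times> Z \<union> {a} \<times> (Z - {i})) = card B * n + (n - 1)"
      using fin a_notin_B assms(3) by (subst card_Un_disjoint) (auto simp: card_cartesian_product)
    ultimately show ?thesis
      using fin n_pos by (simp add: card_image k algebra_simps)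
  next
    case False
    have "{u. {Some a, u} \<in> F} = Some ` B"
      by (rule Collect_option_eqI) (auto simp: B_def False insert_commute)
    moreover have "{u. lift_adj F Z (Some (a, i)) u} = Some ` (B \<times> Z)"
      using assms(3) by (intro Collect_option_pair_eqI) (auto simp: B_def False insert_commute)
    ultimately show ?thesis
      using deg fin by (simp add: card_image card_cartesian_product)
  qed
qed

lemma is_factor_lift_graph:
  assumes "is_factor k (bar G) F"
  shows "is_factor (k * n) (bar H) (lift_graph F Z)"
proof -
  have "lift_graph F Z \<subseteq> {e. \<exists>a b. a \<in> bar H \<and> b \<in> bar H \<and> a \<noteq> b \<and> e = {a, b}}"
    unfolding lift_graph_def using lift_adj_edge by blast
  moreover have "card {e \<in> lift_graph F Z. v \<in> e} = k * n" if "v \<in> bar H" for v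
  proof -
    have "\<forall>e\<in>lift_graph F Z. \<exists>a b. e = {a, b}" unfolding lift_graph_def by blast
    hence "card {e \<in> lift_graph F Z. v \<in> e} = card {u. lift_adj F Z v u}"
      by (simp add: card_incident_eq_card_adjacent)
    also have "\<dots> = k * n"
      using that card_lift_adj_None[OF assms] card_lift_adj_Some[OF assms]
      by (auto simp: bar_H)
    finally show ?thesis .
  qed
  ultimately show ?thesis unfolding is_factor_def by blast
qed

lemma lift_graph_closed_iff:
  assumes k: "k \<in> Z"
  shows "(\<forall>e\<in>lift_graph F Z. act H (g, k) ` e \<in> lift_graph F Z) \<longleftrightarrow> (\<forall>e\<in>F. act G g ` e \<in> F)"
proof
  assume lift_closed: "\<forall>e\<in>lift_graph F Z. act H (g, k) ` e \<in> lift_graph F Z"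
  show "\<forall>e\<in>F. act G g ` e \<in> F"
  proof
    fix e assume "e \<in> F"
    then obtain x y where e: "e = {x, y}" using F_edges by blast
    have "{at_level 0 x, at_level 0 y} \<in> lift_graph F Z"
      using \<open>e \<in> F\<close> e n_pos lift_adj_at_level[of 0] by simp
    from lift_closed[rule_format, OF this]
    have "lift_adj F Z (at_level k (act G g x)) (at_level k (act G g y))"
      using k by simp
    thus "act G g ` e \<in> F" using lift_adj_at_level[OF k] e by simp
  qed
next
  assume closed: "\<forall>e\<in>F. act G g ` e \<in> F"
  have shift_inj: "(i + k) mod int n \<noteq> (j + k) mod int n" if "i \<in> Z" "j \<in> Z" "i \<noteq> j" for i j
    using that mod_add_right_cancel[of i k "int n" j] by auto
  show "\<forall>e\<in>lift_graph F Z. act H (g, k) ` e \<in> lift_graph F Z"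
  proof
    fix e assume "e \<in> lift_graph F Z"
    then obtain x y where e: "e = {x, y}" "lift_adj F Z x y" unfolding lift_graph_def by blast
    have "lift_adj F Z (act H (g, k) x) (act H (g, k) y)"
      using e(2) closed[rule_format, of "{None, Some _}"] closed[rule_format, of "{Some _, Some _}"]
      by (cases x rule: option_pair_cases; cases y rule: option_pair_cases) (auto simp: shift_inj)
    thus "act H (g, k) ` e \<in> lift_graph F Z" using e(1) by simp
  qed
qed

lemma stab_lift_graph: "stab H (lift_graph F Z) = stab G F \<times> Z"
proof -
  have F_bar: "\<forall>e\<in>F. e \<subseteq> bar G" using F_edges by blast
  have lift_bar: "\<forall>e\<in>lift_graph F Z. e \<subseteq> bar H"
    using lift_adj_edge unfolding lift_graph_def by blast
  have "(g, k) \<in> stab H (lift_graph F Z) \<longleftrightarrow> (g, k) \<in> stab G F \<times> Z" for g k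
  proof (cases "g \<in> carrier G \<and> k \<in> Z")
    case True
    thus ?thesis
      using group.stab_iff_closed[OF group_H lift_bar, of "(g, k)"] stab_iff_closed[OF F_bar, of g]
      by (simp add: carrier_H inv_H lift_graph_closed_iff)
  next
    case False
    thus ?thesis by (auto simp: stab_def carrier_H)
  qed
  thus ?thesis by auto
qed

lemma diffs_lift_graph:
  assumes diffs_F: "carrier G - {\<one>} \<subseteq> diffs G F" and c: "{None, Some c} \<in> F"
  shows "carrier H - {\<one>\<^bsub>H\<^esub>} \<subseteq> diffs H (lift_graph F Z)"
proof
  fix p assume "p \<in> carrier H - {\<one>\<^bsub>H\<^esub>}"
  then obtain g k where p: "p = (g, k)" "g \<in> carrier G" "k \<in> Z" "(g, k) \<noteq> (\<one>, 0)"
    by (cases p) (auto simp: carrier_H)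
  have diff: "(g, k) = (a, k) \<otimes>\<^bsub>H\<^esub> inv\<^bsub>H\<^esub> (b, 0)" if "g = a \<otimes> inv b" "b \<in> carrier G" for a b
    using that p(3) inv_H[of b 0] n_pos by simp
  show "p \<in> diffs H (lift_graph F Z)"
  proof (cases "g = \<one>")
    case False
    hence "g \<in> diffs G F" using diffs_F p(2) by blast
    then obtain a b where ab: "{Some a, Some b} \<in> F" "a \<noteq> b" "g = a \<otimes> inv b"
      unfolding mem_diffs_iff by blast
    have "b \<in> carrier G" using F_edge[OF ab(1)] by (auto simp: bar_def)
    hence "(g, k) = (a, k) \<otimes>\<^bsub>H\<^esub> inv\<^bsub>H\<^esub> (b, 0)" using diff ab(3) by blast
    moreover have "{Some (a, k), Some (b, 0)} \<in> lift_graph F Z" using ab(1) p(3) n_pos by simp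
    moreover have "(a, k) \<noteq> (b, 0)" using ab(2) by simp
    ultimately show ?thesis unfolding p(1) mem_diffs_iff by blast
  next
    case True
    have "c \<in> carrier G" using F_edge[OF c] by (auto simp: bar_def)
    hence "(g, k) = (c, k) \<otimes>\<^bsub>H\<^esub> inv\<^bsub>H\<^esub> (c, 0)" using diff[of c c] True by simp
    moreover have "k \<noteq> 0" using p(4) True by simp
    hence "{Some (c, k), Some (c, 0)} \<in> lift_graph F Z" using c p(3) n_pos by simp
    moreover have "(c, k) \<noteq> (c, 0)" using \<open>k \<noteq> 0\<close> by simp
    ultimately show ?thesis unfolding p(1) mem_diffs_iff by blast
  qed
qed

lemma starter_lift_graph:
  assumes starter: "starter G k F" and "0 < k"
  shows "starter H (k * n) (lift_graph F Z)"
proof -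
  from starter have dvd: "k dvd order G" and factor: "is_factor k (bar G) F"
    and stab: "card (stab G F) = k" and diffs_F: "carrier G - {\<one>} \<subseteq> diffs G F"
    unfolding starter_def by blast+
  have "order H = order G * n"
    by (simp add: order_def carrier_H card_cartesian_product)
  hence "k * n dvd order H" using dvd by simp
  moreover have "card (stab H (lift_graph F Z)) = k * n"
    using stab by (simp add: stab_lift_graph card_cartesian_product)
  moreover obtain c where "{None, Some c} \<in> F"
  proof -
    have "card {u. {None, u} \<in> F} = k" using card_adjacent_F[OF factor] by (simp add: bar_def)
    with \<open>0 < k\<close> have "{u. {None, u} \<in> F} \<noteq> {}" by (metis card.empty less_irrefl)
    then obtain u where "{None, u} \<in> F" by blast
    with F_no_loop that show ?thesis by (cases u) auto
  qed
  hence "carrier H - {\<one>\<^bsub>H\<^esub>} \<subseteq> diffs H (lift_graph F Z)"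
    using diffs_F diffs_lift_graph by blast
  ultimately show ?thesis
    unfolding starter_def using is_factor_lift_graph[OF factor] by (intro conjI)
qed

end

theorem theorem4p1:
  fixes G :: "('a, 'b) monoid_scheme" and n :: nat
  assumes "group G" and "finite (carrier G)" and "n \<ge> 1"
    and "\<exists>F. starter G 2 F"
  shows "\<exists>F. starter (G \<times>\<times> integer_mod_group n) (2 * n) F"
proof -
  obtain F where F: "starter G 2 F" using assms(4) by blast
  have "lifting G n F"
    using assms F unfolding lifting_def lifting_axioms_def starter_def is_factor_def by blast
  then interpret lifting G n F .
  show ?thesis using starter_lift_graph[OF F] by auto
qed

end
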